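(* For any i--lattice $L$, ${\rm Con}_{\mathbb{I}}(L)=\{\theta\in{\rm Con}(L): \theta=\theta'\}=\{\theta\vee\theta' : \theta\in{\rm Con}(L)\}=\{\theta\cap\theta' : \theta\in{\rm Con}(L)\}=\{\theta\in{\rm Con}(L): (\forall x\in L)\ ((x/\theta)'=x'/\theta)\}=\{\theta\in{\rm Con}(L): (\forall\gamma\in L/\theta)\ (\gamma'\in L/\theta)\}$.
   Context: An i--lattice is a lattice $L$ with a unary operation $'$ such that $a''=a$ and $a\leq b\Rightarrow b'\leq a'$. ${\rm Con}(L)$ is the lattice of lattice congruences of $L$ (joins $\vee$ taken in ${\rm Con}(L)$); ${\rm Con}_{\mathbb{I}}(L)$ is the set of $\theta\in{\rm Con}(L)$ with $(a,b)\in\theta\Rightarrow(a',b')\in\theta$. For $\theta\subseteq L^2$, $\theta'=\{(a',b'):(a,b)\in\theta\}$; for $M\subseteq L$, $M'=\{x':x\in M\}$; $x/\theta$ is the class of $x$ and $L/\theta$ the set of classes. *)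

theory Defs
  imports Main
begin

definition i_lattice :: "('a::lattice \<Rightarrow> 'a) \<Rightarrow> bool" where
  "i_lattice c \<longleftrightarrow> (\<forall>a. c (c a) = a) \<and> (\<forall>a b. a \<le> b \<longrightarrow> c b \<le> c a)"

definition lat_Con :: "('a::lattice) rel set" where
  "lat_Con = {\<theta>. equiv UNIV \<theta> \<and>
     (\<forall>a b c d. (a, b) \<in> \<theta> \<longrightarrow> (c, d) \<in> \<theta> \<longrightarrow>
        (inf a c, inf b d) \<in> \<theta> \<and> (sup a c, sup b d) \<in> \<theta>)}"

definition lat_ConI :: "('a::lattice \<Rightarrow> 'a) \<Rightarrow> 'a rel set" where
  "lat_ConI c = {\<theta> \<in> lat_Con. \<forall>a b. (a, b) \<in> \<theta> \<longrightarrow> (c a, c b) \<in> \<theta>}"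

definition rel_inv :: "('a \<Rightarrow> 'a) \<Rightarrow> 'a rel \<Rightarrow> 'a rel" where
  "rel_inv c \<theta> = (\<lambda>(a, b). (c a, c b)) ` \<theta>"

definition con_join :: "('a::lattice) rel \<Rightarrow> 'a rel \<Rightarrow> 'a rel" where
  "con_join \<theta> \<phi> = \<Inter> {\<psi> \<in> lat_Con. \<theta> \<union> \<phi> \<subseteq> \<psi>}"

end

theory Submission
  imports Defs
begin

text \<open>Since the involution is an antitone bijection, it interchanges meets and joins, so
  \<open>\<theta> \<mapsto> \<theta>'\<close> is an involutive automorphism of \<open>Con(L)\<close>. A congruence lies in
  \<open>Con\<^sub>I(L)\<close> iff it is fixed by this automorphism; hence \<open>\<theta> \<or> \<theta>'\<close> and \<open>\<theta> \<inter> \<theta>'\<close>, being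
  symmetric in \<open>\<theta>\<close> and \<open>\<theta>'\<close>, are fixed, and fixed points \<open>\<theta>\<close> arise as \<open>\<theta> \<or> \<theta> = \<theta> \<inter> \<theta> = \<theta>\<close>.
  The two descriptions by classes are reformulations of closure under the involution.\<close>

definition rel_compatible :: "('a \<Rightarrow> 'a) \<Rightarrow> 'a rel \<Rightarrow> bool" where
  "rel_compatible c \<theta> \<longleftrightarrow> (\<forall>a b. (a, b) \<in> \<theta> \<longrightarrow> (c a, c b) \<in> \<theta>)"

lemma lat_ConI_eq: "lat_ConI c = {\<theta> \<in> lat_Con. rel_compatible c \<theta>}"
  unfolding lat_ConI_def rel_compatible_def ..

lemma i_lattice_involution: "i_lattice c \<Longrightarrow> c (c a) = a"
  by (simp add: i_lattice_def)

lemma i_lattice_antitone: "i_lattice c \<Longrightarrow> a \<le> b \<Longrightarrow> c b \<le> c a"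
  by (simp add: i_lattice_def)

lemma i_lattice_inf:
  assumes c: "i_lattice c"
  shows "c (inf a b) = sup (c a) (c b)"
proof (rule antisym)
  have "c (sup (c a) (c b)) \<le> inf a b"
    using i_lattice_antitone[OF c, of "c a" "sup (c a) (c b)"]
      i_lattice_antitone[OF c, of "c b" "sup (c a) (c b)"]
    by (simp add: i_lattice_involution[OF c])
  then show "c (inf a b) \<le> sup (c a) (c b)"
    using i_lattice_antitone[OF c] i_lattice_involution[OF c] by metis
  show "sup (c a) (c b) \<le> c (inf a b)"
    using i_lattice_antitone[OF c, of "inf a b" a] i_lattice_antitone[OF c, of "inf a b" b]
    by simp
qed

lemma i_lattice_sup:
  assumes c: "i_lattice c"
  shows "c (sup a b) = inf (c a) (c b)"
  using i_lattice_inf[OF c, of "c a" "c b"] arg_cong[where f = c]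
  by (metis i_lattice_involution[OF c])

context
  fixes c :: "'a \<Rightarrow> 'a"
  assumes involution: "\<And>a. c (c a) = a"
begin

lemma mem_rel_inv: "(x, y) \<in> rel_inv c \<theta> \<longleftrightarrow> (c x, c y) \<in> \<theta>"
  unfolding rel_inv_def by (force simp: involution)

lemma rel_inv_rel_inv: "rel_inv c (rel_inv c \<theta>) = \<theta>"
  by (auto simp: mem_rel_inv involution)

lemma rel_inv_Int: "rel_inv c (\<theta> \<inter> \<phi>) = rel_inv c \<theta> \<inter> rel_inv c \<phi>"
  by (auto simp: mem_rel_inv)

lemma rel_inv_subset_iff: "rel_inv c \<theta> \<subseteq> \<phi> \<longleftrightarrow> \<theta> \<subseteq> rel_inv c \<phi>"
proof -
  have "rel_inv c \<theta> \<subseteq> \<phi> \<longleftrightarrow> (\<forall>x y. (c x, c y) \<in> \<theta> \<longrightarrow> (x, y) \<in> \<phi>)"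
    by (auto simp: mem_rel_inv)
  also have "\<dots> \<longleftrightarrow> (\<forall>x y. (x, y) \<in> \<theta> \<longrightarrow> (c x, c y) \<in> \<phi>)"
    by (metis involution)
  also have "\<dots> \<longleftrightarrow> \<theta> \<subseteq> rel_inv c \<phi>"
    by (auto simp: mem_rel_inv)
  finally show ?thesis .
qed

lemma rel_compatible_iff_subset_rel_inv: "rel_compatible c \<theta> \<longleftrightarrow> \<theta> \<subseteq> rel_inv c \<theta>"
  unfolding rel_compatible_def by (auto simp: mem_rel_inv)

lemma rel_compatible_iff_rel_inv_eq: "rel_compatible c \<theta> \<longleftrightarrow> \<theta> = rel_inv c \<theta>"
  using rel_inv_subset_iff[of \<theta> \<theta>] by (auto simp: rel_compatible_iff_subset_rel_inv)

lemma rel_compatible_iff_image_Image: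
  "rel_compatible c \<theta> \<longleftrightarrow> (\<forall>x. c ` (\<theta> `` {x}) = \<theta> `` {c x})"
proof
  assume compat: "rel_compatible c \<theta>"
  show "\<forall>x. c ` (\<theta> `` {x}) = \<theta> `` {c x}"
  proof (intro allI equalityI subsetI)
    fix x z assume "z \<in> c ` (\<theta> `` {x})"
    then show "z \<in> \<theta> `` {c x}"
      using compat unfolding rel_compatible_def by blast
  next
    fix x z assume "z \<in> \<theta> `` {c x}"
    then have "(c (c x), c z) \<in> \<theta>"
      using compat unfolding rel_compatible_def by simp
    then have "c z \<in> \<theta> `` {x}"
      by (simp add: involution)
    then show "z \<in> c ` (\<theta> `` {x})"
      using involution by (metis imageI)
  qed
next
  assume "\<forall>x. c ` (\<theta> `` {x}) = \<theta> `` {c x}"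
  then show "rel_compatible c \<theta>"
    unfolding rel_compatible_def by blast
qed

lemma rel_compatible_iff_image_quotient:
  assumes "equiv UNIV \<theta>"
  shows "rel_compatible c \<theta> \<longleftrightarrow> (\<forall>\<gamma> \<in> UNIV // \<theta>. c ` \<gamma> \<in> UNIV // \<theta>)"
proof
  assume "rel_compatible c \<theta>"
  then have "c ` (\<theta> `` {x}) = \<theta> `` {c x}" for x
    by (simp add: rel_compatible_iff_image_Image)
  then show "\<forall>\<gamma> \<in> UNIV // \<theta>. c ` \<gamma> \<in> UNIV // \<theta>"
    unfolding quotient_def by blast
next
  assume classes: "\<forall>\<gamma> \<in> UNIV // \<theta>. c ` \<gamma> \<in> UNIV // \<theta>"
  show "rel_compatible c \<theta>"
    unfolding rel_compatible_def
  proof (intro allI impI)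
    fix a b assume "(a, b) \<in> \<theta>"
    obtain z where z: "c ` (\<theta> `` {a}) = \<theta> `` {z}"
      using classes[rule_format, of "\<theta> `` {a}"] unfolding quotient_def by blast
    have "a \<in> \<theta> `` {a}" "b \<in> \<theta> `` {a}"
      using \<open>(a, b) \<in> \<theta>\<close> equiv_class_self[OF assms UNIV_I] by simp_all
    then have "c a \<in> \<theta> `` {z}" "c b \<in> \<theta> `` {z}"
      unfolding z[symmetric] by blast+
    then show "(c a, c b) \<in> \<theta>"
      using assms by (meson Image_singleton_iff equivE symD transD)
  qed
qed

end

lemma lat_Con_intro:
  assumes "\<And>x. (x, x) \<in> \<theta>"
    and "\<And>x y. (x, y) \<in> \<theta> \<Longrightarrow> (y, x) \<in> \<theta>"
    and "\<And>x y z. (x, y) \<in> \<theta> \<Longrightarrow> (y, z) \<in> \<theta> \<Longrightarrow> (x, z) \<in> \<theta>"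
    and "\<And>a b x y. (a, b) \<in> \<theta> \<Longrightarrow> (x, y) \<in> \<theta> \<Longrightarrow> (inf a x, inf b y) \<in> \<theta>"
    and "\<And>a b x y. (a, b) \<in> \<theta> \<Longrightarrow> (x, y) \<in> \<theta> \<Longrightarrow> (sup a x, sup b y) \<in> \<theta>"
  shows "\<theta> \<in> lat_Con"
proof -
  have "equiv UNIV \<theta>"
    by (rule equivI) (auto intro: refl_onI symI transI assms(1-3))
  then show ?thesis
    unfolding lat_Con_def using assms(4,5) by blast
qed

lemma lat_Con_equiv: "\<theta> \<in> lat_Con \<Longrightarrow> equiv UNIV \<theta>"
  unfolding lat_Con_def by simp

lemma lat_Con_refl: "\<theta> \<in> lat_Con \<Longrightarrow> (x, x) \<in> \<theta>"
  by (drule lat_Con_equiv) (auto elim: equivE simp: refl_on_def)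

lemma lat_Con_sym: "\<theta> \<in> lat_Con \<Longrightarrow> (x, y) \<in> \<theta> \<Longrightarrow> (y, x) \<in> \<theta>"
  by (drule lat_Con_equiv) (auto elim: equivE dest: symD)

lemma lat_Con_trans: "\<theta> \<in> lat_Con \<Longrightarrow> (x, y) \<in> \<theta> \<Longrightarrow> (y, z) \<in> \<theta> \<Longrightarrow> (x, z) \<in> \<theta>"
  by (drule lat_Con_equiv) (auto elim: equivE dest: transD)

lemma lat_Con_inf:
  "\<theta> \<in> lat_Con \<Longrightarrow> (a, b) \<in> \<theta> \<Longrightarrow> (x, y) \<in> \<theta> \<Longrightarrow> (inf a x, inf b y) \<in> \<theta>"
  unfolding lat_Con_def by simp

lemma lat_Con_sup:
  "\<theta> \<in> lat_Con \<Longrightarrow> (a, b) \<in> \<theta> \<Longrightarrow> (x, y) \<in> \<theta> \<Longrightarrow> (sup a x, sup b y) \<in> \<theta>"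
  unfolding lat_Con_def by simp

lemma Inter_lat_Con:
  assumes "S \<subseteq> lat_Con"
  shows "\<Inter> S \<in> lat_Con"
proof (rule lat_Con_intro)
  show "(x, x) \<in> \<Inter> S" for x
    using assms lat_Con_refl by blast
  show "(y, x) \<in> \<Inter> S" if "(x, y) \<in> \<Inter> S" for x y
    using assms that lat_Con_sym by blast
  show "(x, z) \<in> \<Inter> S" if "(x, y) \<in> \<Inter> S" "(y, z) \<in> \<Inter> S" for x y z
    using assms that lat_Con_trans by blast
  show "(inf a x, inf b y) \<in> \<Inter> S" if "(a, b) \<in> \<Inter> S" "(x, y) \<in> \<Inter> S" for a b x y
    using assms that lat_Con_inf by blast
  show "(sup a x, sup b y) \<in> \<Inter> S" if "(a, b) \<in> \<Inter> S" "(x, y) \<in> \<Inter> S" for a b x y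
    using assms that lat_Con_sup by blast
qed

lemma Int_lat_Con: "\<theta> \<in> lat_Con \<Longrightarrow> \<phi> \<in> lat_Con \<Longrightarrow> \<theta> \<inter> \<phi> \<in> lat_Con"
  using Inter_lat_Con[of "{\<theta>, \<phi>}"] by simp

lemma rel_inv_lat_Con:
  assumes c: "i_lattice c" and \<theta>: "\<theta> \<in> lat_Con"
  shows "rel_inv c \<theta> \<in> lat_Con"
proof (rule lat_Con_intro)
  note mem = mem_rel_inv[OF i_lattice_involution[OF c]]
  show "(x, x) \<in> rel_inv c \<theta>" for x
    unfolding mem by (rule lat_Con_refl[OF \<theta>])
  show "(y, x) \<in> rel_inv c \<theta>" if "(x, y) \<in> rel_inv c \<theta>" for x y
    using that unfolding mem by (rule lat_Con_sym[OF \<theta>])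
  show "(x, z) \<in> rel_inv c \<theta>" if "(x, y) \<in> rel_inv c \<theta>" "(y, z) \<in> rel_inv c \<theta>" for x y z
    using that unfolding mem by (rule lat_Con_trans[OF \<theta>])
  show "(inf a x, inf b y) \<in> rel_inv c \<theta>"
    if "(a, b) \<in> rel_inv c \<theta>" "(x, y) \<in> rel_inv c \<theta>" for a b x y
    using lat_Con_sup[OF \<theta>] that unfolding mem i_lattice_inf[OF c] .
  show "(sup a x, sup b y) \<in> rel_inv c \<theta>"
    if "(a, b) \<in> rel_inv c \<theta>" "(x, y) \<in> rel_inv c \<theta>" for a b x y
    using lat_Con_inf[OF \<theta>] that unfolding mem i_lattice_sup[OF c] .
qed

lemma con_join_lat_Con: "con_join \<theta> \<phi> \<in> lat_Con"
  unfolding con_join_def by (rule Inter_lat_Con) blast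

lemma con_join_upper: "\<theta> \<union> \<phi> \<subseteq> con_join \<theta> \<phi>"
  unfolding con_join_def by blast

lemma con_join_least: "\<psi> \<in> lat_Con \<Longrightarrow> \<theta> \<subseteq> \<psi> \<Longrightarrow> \<phi> \<subseteq> \<psi> \<Longrightarrow> con_join \<theta> \<phi> \<subseteq> \<psi>"
  unfolding con_join_def by blast

lemma con_join_commute: "con_join \<theta> \<phi> = con_join \<phi> \<theta>"
  unfolding con_join_def by (simp add: Un_commute)

lemma con_join_idem: "\<theta> \<in> lat_Con \<Longrightarrow> con_join \<theta> \<theta> = \<theta>"
  using con_join_upper con_join_least by (metis Un_absorb antisym order_refl)

lemma rel_inv_con_join_subset:
  assumes c: "i_lattice c"
  shows "rel_inv c (con_join \<theta> \<phi>) \<subseteq> con_join (rel_inv c \<theta>) (rel_inv c \<phi>)"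
proof -
  note inv = i_lattice_involution[OF c]
  let ?J = "con_join (rel_inv c \<theta>) (rel_inv c \<phi>)"
  have "rel_inv c \<theta> \<subseteq> ?J" "rel_inv c \<phi> \<subseteq> ?J"
    using con_join_upper by blast+
  then have "\<theta> \<subseteq> rel_inv c ?J" "\<phi> \<subseteq> rel_inv c ?J"
    by (simp_all only: rel_inv_subset_iff[OF inv])
  then have "con_join \<theta> \<phi> \<subseteq> rel_inv c ?J"
    by (simp add: con_join_least rel_inv_lat_Con[OF c con_join_lat_Con])
  then show ?thesis
    by (simp only: rel_inv_subset_iff[OF inv, symmetric])
qed

lemma rel_inv_con_join:
  assumes c: "i_lattice c"
  shows "rel_inv c (con_join \<theta> \<phi>) = con_join (rel_inv c \<theta>) (rel_inv c \<phi>)"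
proof (rule antisym)
  note inv = i_lattice_involution[OF c]
  show "rel_inv c (con_join \<theta> \<phi>) \<subseteq> con_join (rel_inv c \<theta>) (rel_inv c \<phi>)"
    by (rule rel_inv_con_join_subset[OF c])
  have "rel_inv c (con_join (rel_inv c \<theta>) (rel_inv c \<phi>)) \<subseteq> con_join \<theta> \<phi>"
    using rel_inv_con_join_subset[OF c, of "rel_inv c \<theta>" "rel_inv c \<phi>"]
    by (simp only: rel_inv_rel_inv[OF inv])
  then show "con_join (rel_inv c \<theta>) (rel_inv c \<phi>) \<subseteq> rel_inv c (con_join \<theta> \<phi>)"
    by (simp only: rel_inv_subset_iff[OF inv])
qed

theorem lemma4p4:
  fixes c :: "'a::lattice \<Rightarrow> 'a"
  assumes "i_lattice c"
  shows "(lat_ConI c = {\<theta> \<in> lat_Con. \<theta> = rel_inv c \<theta>}) \<and>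
    (lat_ConI c = {con_join \<theta> (rel_inv c \<theta>) | \<theta>. \<theta> \<in> lat_Con}) \<and>
    (lat_ConI c = {\<theta> \<inter> rel_inv c \<theta> | \<theta>. \<theta> \<in> lat_Con}) \<and>
    (lat_ConI c = {\<theta> \<in> lat_Con. \<forall>x. c ` (\<theta> `` {x}) = \<theta> `` {c x}}) \<and>
    (lat_ConI c = {\<theta> \<in> lat_Con. \<forall>\<gamma> \<in> UNIV // \<theta>. c ` \<gamma> \<in> UNIV // \<theta>})"
proof -
  note inv = i_lattice_involution[OF assms]
  note fixed = rel_compatible_iff_rel_inv_eq[OF inv]
  have join_fixed: "rel_inv c (con_join \<theta> (rel_inv c \<theta>)) = con_join \<theta> (rel_inv c \<theta>)" for \<theta>
    by (simp only: rel_inv_con_join[OF assms] rel_inv_rel_inv[OF inv] con_join_commute)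
  have meet_fixed: "rel_inv c (\<theta> \<inter> rel_inv c \<theta>) = \<theta> \<inter> rel_inv c \<theta>" for \<theta>
    by (simp only: rel_inv_Int[OF inv] rel_inv_rel_inv[OF inv] Int_commute)
  have "lat_ConI c = {con_join \<theta> (rel_inv c \<theta>) | \<theta>. \<theta> \<in> lat_Con}"
  proof (intro equalityI subsetI)
    fix \<theta> assume "\<theta> \<in> lat_ConI c"
    then have "\<theta> \<in> lat_Con" "\<theta> = con_join \<theta> (rel_inv c \<theta>)"
      by (auto simp: lat_ConI_eq fixed con_join_idem)
    then show "\<theta> \<in> {con_join \<theta> (rel_inv c \<theta>) | \<theta>. \<theta> \<in> lat_Con}"
      by blast
  qed (auto simp: lat_ConI_eq fixed join_fixed con_join_lat_Con)
  moreover have "lat_ConI c = {\<theta> \<inter> rel_inv c \<theta> | \<theta>. \<theta> \<in> lat_Con}"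
  proof (intro equalityI subsetI)
    fix \<theta> assume "\<theta> \<in> lat_ConI c"
    then have "\<theta> \<in> lat_Con" "\<theta> = \<theta> \<inter> rel_inv c \<theta>"
      by (auto simp: lat_ConI_eq fixed)
    then show "\<theta> \<in> {\<theta> \<inter> rel_inv c \<theta> | \<theta>. \<theta> \<in> lat_Con}"
      by blast
  qed (auto simp: lat_ConI_eq fixed meet_fixed Int_lat_Con rel_inv_lat_Con[OF assms])
  ultimately show ?thesis
    unfolding lat_ConI_eq fixed[symmetric] rel_compatible_iff_image_Image[OF inv, symmetric]
    using rel_compatible_iff_image_quotient[OF inv lat_Con_equiv] by blast
qed

end
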